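(* Let $n \geq 1$ and let $f:\{1,\ldots,n\}\to\{1,\ldots,n\}$ be any (total) function. Then there exists a well-formed compact-notation word $w$ over the points $\{1,\ldots,n\}$ (as defined in the context) such that $\mathcal{I}(w)=f$, i.e.\ every transformation of $\{1,\ldots,n\}$ can be written in the compact notation.
   Context: Compact notation. Fix $n\ge 1$. Words are over the terminal symbols \texttt{[}, \texttt{]}, \texttt{(}, \texttt{)}, \texttt{,}, \texttt{|} and symbols for the points $1,\ldots,n$. They are generated by the context-free grammar with start symbol $S$ and nonterminals $C$ (components), $N$ (nontrivial trees), $T$ (trees), $P$ (points): $S \to C^+ \mid \texttt{()}$; $C \to \texttt{(}\,T_1\texttt{,}T_2\texttt{,}\ldots\texttt{,}T_k\,\texttt{)}$ with $k\ge 2$, or $C\to N$; $N \to \texttt{[}\,T_1\texttt{,}\ldots\texttt{,}T_k\,\texttt{|}\,P\,\texttt{]}$ with $k\ge 2$ (a ``splat''), or $N \to \texttt{[}\,T_1\texttt{,}\ldots\texttt{,}T_k\,\texttt{]}$ with $k\ge 2$ (a ``conveyor belt''); $T \to N \mid P$; $P \to 1\mid 2\mid\cdots\mid n$. A word is well-formed if it is generated by this grammar and each point $1,\ldots,n$ occurs in it at most once. Semantics. Maps are represented as sets of pairs $(p,q)$ meaning $p\mapsto q$. The root of a tree is defined by $r(p)=p$ for a point $p$, $r(\texttt{[}T_1\texttt{,}\ldots\texttt{,}T_k\texttt{|}p\texttt{]})=p$, and $r(\texttt{[}T_1\texttt{,}\ldots\texttt{,}T_k\texttt{]})=r(T_k)$.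 Interpretation $\mathcal{I}$: for a point, $\mathcal{I}(P)=\varnothing$; for a splat, $\mathcal{I}(\texttt{[}T_1\texttt{,}\ldots\texttt{,}T_k\texttt{|}p\texttt{]})=\bigcup_{i=1}^k\mathcal{I}(T_i)\cup\{(r(T_i),p):1\le i\le k\}$; for a conveyor belt, $\mathcal{I}(\texttt{[}T_1\texttt{,}\ldots\texttt{,}T_k\texttt{]})=\bigcup_{i=1}^k\mathcal{I}(T_i)\cup\{(r(T_i),r(T_{i+1})):1\le i<k\}$; for a cycle component, $\mathcal{I}(\texttt{(}T_1\texttt{,}\ldots\texttt{,}T_k\texttt{)})=\bigcup_{i=1}^k\mathcal{I}(T_i)\cup\{(r(T_i),r(T_{i+1})):1\le i<k\}\cup\{(r(T_k),r(T_1))\}$; a component $C\to N$ has $\mathcal{I}(C)=\mathcal{I}(N)$. For the whole word: $\mathcal{I}(\texttt{()})$ is the identity map of $\{1,\ldots,n\}$, and if $w = C_1\cdots C_k$ then $\mathcal{I}(w)=\bigcup_{i=1}^k\mathcal{I}(C_i)\cup\{(p,p): p\in\{1,\ldots,n\}\text{ has no image in any }\mathcal{I}(C_i)\}$. For a well-formed word this set of pairs is the graph of a total function $\{1,\ldots,n\}\to\{1,\ldots,n\}$, which is identified with $\mathcal{I}(w)$. *)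

theory Defs
  imports Main
begin

datatype symbol = LBrack | RBrack | LPar | RPar | Comma | Bar | PtSym nat

type_synonym word = "symbol list"

datatype tree = Point nat | Splat "tree list" nat | Belt "tree list"

datatype comp = Cycle "tree list" | NTree tree

datatype sword = IdWord | Comps "comp list"

fun commasep :: "word list \<Rightarrow> word" where
  "commasep [] = []"
| "commasep [w] = w"
| "commasep (w # v # ws) = w @ [Comma] @ commasep (v # ws)"

fun yield_tree :: "tree \<Rightarrow> word" where
  "yield_tree (Point p) = [PtSym p]"
| "yield_tree (Splat ts p) = [LBrack] @ commasep (map yield_tree ts) @ [Bar, PtSym p, RBrack]"
| "yield_tree (Belt ts) = [LBrack] @ commasep (map yield_tree ts) @ [RBrack]"

fun yield_comp :: "comp \<Rightarrow> word" where
  "yield_comp (Cycle ts) = [LPar] @ commasep (map yield_tree ts) @ [RPar]"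
| "yield_comp (NTree t) = yield_tree t"

fun yield_sword :: "sword \<Rightarrow> word" where
  "yield_sword IdWord = [LPar, RPar]"
| "yield_sword (Comps cs) = concat (map yield_comp cs)"

fun valid_tree :: "nat \<Rightarrow> tree \<Rightarrow> bool" where
  "valid_tree n (Point p) = (1 \<le> p \<and> p \<le> n)"
| "valid_tree n (Splat ts p) = (2 \<le> length ts \<and> (\<forall>t\<in>set ts. valid_tree n t) \<and> 1 \<le> p \<and> p \<le> n)"
| "valid_tree n (Belt ts) = (2 \<le> length ts \<and> (\<forall>t\<in>set ts. valid_tree n t))"

fun is_point :: "tree \<Rightarrow> bool" where
  "is_point (Point _) = True"
| "is_point _ = False"

fun valid_comp :: "nat \<Rightarrow> comp \<Rightarrow> bool" where
  "valid_comp n (Cycle ts) = (2 \<le> length ts \<and> (\<forall>t\<in>set ts. valid_tree n t))"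
| "valid_comp n (NTree t) = (\<not> is_point t \<and> valid_tree n t)"

fun valid_sword :: "nat \<Rightarrow> sword \<Rightarrow> bool" where
  "valid_sword n IdWord = True"
| "valid_sword n (Comps cs) = (cs \<noteq> [] \<and> (\<forall>c\<in>set cs. valid_comp n c))"

definition generated :: "nat \<Rightarrow> word \<Rightarrow> bool" where
  "generated n w \<longleftrightarrow> (\<exists>s. valid_sword n s \<and> yield_sword s = w)"

definition points_of_word :: "word \<Rightarrow> nat list" where
  "points_of_word w = [p. PtSym p \<leftarrow> w]"

definition well_formed :: "nat \<Rightarrow> word \<Rightarrow> bool" where
  "well_formed n w \<longleftrightarrow> generated n w \<and> distinct (points_of_word w)"

function root :: "tree \<Rightarrow> nat" where
  "root (Point p) = p"
| "root (Splat ts p) = p"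
| "root (Belt ts) = (if ts = [] then 0 else root (last ts))"
  by pat_completeness auto
termination
  by (relation "measure size") (auto simp: less_Suc_eq_le intro: size_list_estimation' last_in_set)

fun interp_tree :: "tree \<Rightarrow> (nat \<times> nat) set" where
  "interp_tree (Point p) = {}"
| "interp_tree (Splat ts p) =
     (\<Union>t\<in>set ts. interp_tree t) \<union> {(root t, p) | t. t \<in> set ts}"
| "interp_tree (Belt ts) =
     (\<Union>t\<in>set ts. interp_tree t) \<union> {(root (ts ! i), root (ts ! (i+1))) | i. i + 1 < length ts}"

fun interp_comp :: "comp \<Rightarrow> (nat \<times> nat) set" where
  "interp_comp (Cycle ts) =
     (\<Union>t\<in>set ts. interp_tree t) \<union> {(root (ts ! i), root (ts ! (i+1))) | i. i + 1 < length ts}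
     \<union> {(root (last ts), root (hd ts))}"
| "interp_comp (NTree t) = interp_tree t"

fun interp_sword :: "nat \<Rightarrow> sword \<Rightarrow> (nat \<times> nat) set" where
  "interp_sword n IdWord = {(p, p) | p. p \<in> {1..n}}"
| "interp_sword n (Comps cs) =
     (\<Union>c\<in>set cs. interp_comp c) \<union>
     {(p, p) | p. p \<in> {1..n} \<and> p \<notin> Domain (\<Union>c\<in>set cs. interp_comp c)}"

definition graph_on :: "nat \<Rightarrow> (nat \<Rightarrow> nat) \<Rightarrow> (nat \<times> nat) set" where
  "graph_on n f = {(p, f p) | p. p \<in> {1..n}}"

end

(* The functional graph of f consists of cycles of periodic points with trees of non-periodic
   points hanging at them.  The tree hanging at q is built by well-founded recursion: the trees
   of the non-periodic preimages of q are joined at q by a splat (by a conveyor belt if there is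
   only one).  A cycle of length at least two becomes a cycle component of the trees hanging at
   its points, a fixed point becomes the component given by its tree, or nothing when that tree
   is trivial, since unmentioned points are fixed.  Taking one component per cycle, every point
   is written exactly once and the interpretation is the graph of f.  Since the grammar is
   unambiguous, every derivation of the word has this interpretation. *)

theory Submission
  imports Defs "HOL-Combinatorics.Orbits"
begin

section \<open>Unambiguity of the grammar\<close>

lemma commasep_Cons: "commasep (w # ws) = w @ (if ws = [] then [] else Comma # commasep ws)"
  by (cases ws) auto

text \<open>The yield of a tree never starts with one of these symbols, so the end of a
  comma-separated list of trees can be recognised when the list is followed by one.\<close>

definition starts_closing :: "word \<Rightarrow> bool" where
  "starts_closing r \<longleftrightarrow> (\<exists>s w. r = s # w \<and> s \<in> {Bar, RBrack, RPar})"

lemma starts_closing_simps [simp]: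
  "\<not> starts_closing []" "starts_closing (s # w) \<longleftrightarrow> s \<in> {Bar, RBrack, RPar}"
  by (auto simp: starts_closing_def)

lemma not_starts_closing_yield_tree: "\<not> starts_closing (yield_tree t @ r)"
  by (cases t) auto

lemma starts_closing_commasep:
  "starts_closing (commasep (map yield_tree ts) @ r) \<longleftrightarrow> ts = [] \<and> starts_closing r"
proof (cases ts)
  case (Cons t ts')
  then show ?thesis
    using not_starts_closing_yield_tree[of t] by (simp add: commasep_Cons)
qed simp

definition prefix_unique :: "tree \<Rightarrow> bool" where
  "prefix_unique t \<longleftrightarrow> (\<forall>t' r r'. yield_tree t @ r = yield_tree t' @ r' \<longrightarrow> t = t' \<and> r = r')"

lemma commasep_prefix_unique:
  assumes "\<forall>t\<in>set ts. prefix_unique t"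
    and "commasep (map yield_tree ts) @ r = commasep (map yield_tree ts') @ r'"
    and "starts_closing r" "starts_closing r'"
  shows "ts = ts' \<and> r = r'"
  using assms
proof (induction ts arbitrary: ts')
  case Nil
  then show ?case using starts_closing_commasep[of ts' r'] by simp
next
  case (Cons t ts)
  show ?case
  proof (cases ts')
    case Nil
    then show ?thesis using Cons.prems starts_closing_commasep[of "t # ts" r] by simp
  next
    case (Cons t' ts'')
    let ?rest = "\<lambda>ts r. (if ts = [] then [] else Comma # commasep (map yield_tree ts)) @ r"
    have "prefix_unique t"
      using Cons.prems(1) by simp
    moreover have "yield_tree t @ ?rest ts r = yield_tree t' @ ?rest ts'' r'"
      using Cons.prems(2) \<open>ts' = _\<close> by (simp add: commasep_Cons)
    ultimately have "t = t'" and rest: "?rest ts r = ?rest ts'' r'"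
      unfolding prefix_unique_def by blast+
    consider "ts = []" "ts'' = []" | "ts = []" "ts'' \<noteq> []" | "ts \<noteq> []" "ts'' = []"
      | "ts \<noteq> []" "ts'' \<noteq> []"
      by blast
    then have "ts = ts'' \<and> r = r'"
    proof cases
      case 1 with rest show ?thesis by simp
    next
      case 2 with rest Cons.prems(3) show ?thesis by simp
    next
      case 3 with rest[symmetric] Cons.prems(4) show ?thesis by simp
    next
      case 4
      with rest have "commasep (map yield_tree ts) @ r = commasep (map yield_tree ts'') @ r'"
        by simp
      with Cons.prems(1,3,4) show ?thesis by (intro Cons.IH) auto
    qed
    with \<open>t = t'\<close> \<open>ts' = _\<close> show ?thesis by simp
  qed
qed

lemma prefix_unique: "prefix_unique t"
proof (induction t)
  case (Point p)
  show ?case unfolding prefix_unique_def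
  proof (intro allI impI)
    fix t' r r' assume "yield_tree (Point p) @ r = yield_tree t' @ r'"
    then show "Point p = t' \<and> r = r'" by (cases t') auto
  qed
next
  case (Splat ts p)
  then have IH: "\<forall>t\<in>set ts. prefix_unique t" by blast
  show ?case unfolding prefix_unique_def
  proof (intro allI impI)
    fix t' r r' assume "yield_tree (Splat ts p) @ r = yield_tree t' @ r'"
    then show "Splat ts p = t' \<and> r = r'"
      by (cases t') (auto dest: commasep_prefix_unique[OF IH])
  qed
next
  case (Belt ts)
  then have IH: "\<forall>t\<in>set ts. prefix_unique t" by blast
  show ?case unfolding prefix_unique_def
  proof (intro allI impI)
    fix t' r r' assume "yield_tree (Belt ts) @ r = yield_tree t' @ r'"
    then show "Belt ts = t' \<and> r = r'"
      by (cases t') (auto dest: commasep_prefix_unique[OF IH])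
  qed
qed

lemma yield_tree_first_symbol:
  "yield_tree t @ r = s # w \<Longrightarrow> s \<notin> {Comma, Bar, RBrack, LPar, RPar}"
  by (cases t) auto

lemma yield_comp_prefix_unique:
  assumes "yield_comp c @ r = yield_comp c' @ r'"
  shows "c = c' \<and> r = r'"
proof (cases c; cases c')
  fix ts ts' assume "c = Cycle ts" "c' = Cycle ts'"
  with assms show ?thesis
    using commasep_prefix_unique[of ts "RPar # r" ts' "RPar # r'"] prefix_unique by simp
next
  fix t t' assume "c = NTree t" "c' = NTree t'"
  with assms show ?thesis
    using prefix_unique[of t] unfolding prefix_unique_def by simp
next
  fix ts t' assume "c = Cycle ts" "c' = NTree t'"
  with assms have "yield_tree t' @ r' = LPar # commasep (map yield_tree ts) @ RPar # r"
    by simp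
  then show ?thesis by (auto dest: yield_tree_first_symbol)
next
  fix t ts' assume "c = NTree t" "c' = Cycle ts'"
  with assms show ?thesis
    using yield_tree_first_symbol[of t r LPar] by simp
qed

lemma yield_tree_not_Nil: "yield_tree t \<noteq> []"
  by (cases t) auto

lemma yield_comp_not_Nil: "yield_comp c \<noteq> []"
  by (cases c) (simp_all add: yield_tree_not_Nil)

lemma concat_yield_comp_inj:
  "concat (map yield_comp cs) = concat (map yield_comp cs') \<Longrightarrow> cs = cs'"
proof (induction cs arbitrary: cs')
  case Nil
  then show ?case by (cases cs') (auto simp: yield_comp_not_Nil)
next
  case (Cons c cs)
  then show ?case
    by (cases cs') (auto simp: yield_comp_not_Nil dest: yield_comp_prefix_unique)
qed

lemma yield_sword_Comps_not_identity:
  assumes "valid_sword n (Comps cs)"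
  shows "yield_sword (Comps cs) \<noteq> yield_sword IdWord"
proof -
  obtain c cs' where cs: "cs = c # cs'" and c: "valid_comp n c"
    using assms by (cases cs) auto
  show ?thesis
  proof (cases c)
    case (Cycle ts)
    with c obtain t ts' where "ts = t # ts'" by (cases ts) auto
    with Cycle cs show ?thesis
      by (auto simp: commasep_Cons dest: yield_tree_first_symbol)
  next
    case (NTree t)
    with cs show ?thesis by (auto dest: yield_tree_first_symbol)
  qed
qed

lemma yield_sword_inj:
  assumes "valid_sword n s" "valid_sword n s'" "yield_sword s = yield_sword s'"
  shows "s = s'"
proof (cases s; cases s')
  fix cs cs' assume "s = Comps cs" "s' = Comps cs'"
  with assms(3) show ?thesis by (simp add: concat_yield_comp_inj)
qed (use assms yield_sword_Comps_not_identity in metis)+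

fun tree_points :: "tree \<Rightarrow> nat list" where
  "tree_points (Point p) = [p]"
| "tree_points (Splat ts p) = concat (map tree_points ts) @ [p]"
| "tree_points (Belt ts) = concat (map tree_points ts)"

fun comp_points :: "comp \<Rightarrow> nat list" where
  "comp_points (Cycle ts) = concat (map tree_points ts)"
| "comp_points (NTree t) = tree_points t"

lemma points_of_word_Nil [simp]: "points_of_word [] = []"
  by (simp add: points_of_word_def)

lemma points_of_word_Cons [simp]:
  "points_of_word (s # w) = (case s of PtSym p \<Rightarrow> p # points_of_word w | _ \<Rightarrow> points_of_word w)"
  by (cases s) (simp_all add: points_of_word_def)

lemma points_of_word_append [simp]: "points_of_word (u @ v) = points_of_word u @ points_of_word v"
  by (simp add: points_of_word_def)

lemma points_of_word_concat: "points_of_word (concat ws) = concat (map points_of_word ws)"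
  by (induction ws) simp_all

lemma points_of_word_commasep: "points_of_word (commasep ws) = concat (map points_of_word ws)"
  by (induction ws rule: commasep.induct) simp_all

lemma points_of_word_yield_tree [simp]: "points_of_word (yield_tree t) = tree_points t"
  by (induction t) (simp_all add: points_of_word_commasep cong: map_cong)

lemma points_of_word_yield_comp [simp]: "points_of_word (yield_comp c) = comp_points c"
  by (cases c) (simp_all add: points_of_word_commasep cong: map_cong)

text \<open>A splat needs at least two subtrees, so a single subtree is attached to q by a
  conveyor belt.\<close>

definition join_branches :: "tree list \<Rightarrow> nat \<Rightarrow> tree" where
  "join_branches ts q = (case ts of [] \<Rightarrow> Point q | [t] \<Rightarrow> Belt [t, Point q] | _ \<Rightarrow> Splat ts q)"

lemma join_branches_cases:
  obtains "ts = []" "join_branches ts q = Point q"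
  | t where "ts = [t]" "join_branches ts q = Belt [t, Point q]"
  | "2 \<le> length ts" "join_branches ts q = Splat ts q"
  unfolding join_branches_def by (cases ts rule: remdups_adj.cases) auto

lemma root_join_branches [simp]: "root (join_branches ts q) = q"
  by (cases ts q rule: join_branches_cases) auto

lemma tree_points_join_branches [simp]:
  "tree_points (join_branches ts q) = concat (map tree_points ts) @ [q]"
  by (cases ts q rule: join_branches_cases) auto

lemma valid_join_branches:
  "valid_tree n (join_branches ts q) \<longleftrightarrow> q \<in> {1..n} \<and> (\<forall>t\<in>set ts. valid_tree n t)"
  by (cases ts q rule: join_branches_cases) auto

lemma interp_join_branches:
  "interp_tree (join_branches ts q) = (\<Union>t\<in>set ts. interp_tree t) \<union> (\<lambda>t. (root t, q)) ` set ts"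
proof (cases ts q rule: join_branches_cases)
  case (2 t)
  have "{(root ([t, Point q] ! i), root ([t, Point q] ! (i + 1))) | i. i + 1 < 2} = {(root t, q)}"
    by auto
  with 2 show ?thesis by simp
qed auto

lemma Domain_interp_join_branches:
  "Domain (interp_tree (join_branches ts q)) = (\<Union>t\<in>set ts. Domain (interp_tree t)) \<union> root ` set ts"
  by (auto simp: interp_join_branches)

lemma interp_Cycle:
  assumes "ts \<noteq> []"
  shows "interp_comp (Cycle ts) = (\<Union>t\<in>set ts. interp_tree t) \<union>
    {(root (ts ! i), root (ts ! (Suc i mod length ts))) | i. i < length ts}"
proof -
  let ?l = "length ts"
  have "{(root (ts ! i), root (ts ! (i+1))) | i. i + 1 < ?l} \<union> {(root (last ts), root (hd ts))} =
        {(root (ts ! i), root (ts ! (Suc i mod ?l))) | i. i < ?l}" (is "?A \<union> ?B = ?C")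
  proof
    show "?A \<union> ?B \<subseteq> ?C"
    proof -
      have "(root (last ts), root (hd ts)) \<in> ?C"
        using assms by (auto simp: last_conv_nth hd_conv_nth intro!: exI[of _ "?l - 1"])
      moreover have "?A \<subseteq> ?C" by force
      ultimately show ?thesis by blast
    qed
    show "?C \<subseteq> ?A \<union> ?B"
    proof
      fix e assume "e \<in> ?C"
      then obtain i where i: "i < ?l" "e = (root (ts ! i), root (ts ! (Suc i mod ?l)))" by blast
      show "e \<in> ?A \<union> ?B"
      proof (cases "Suc i < ?l")
        case True with i show ?thesis by auto
      next
        case False
        with i have "i = ?l - 1" "Suc i = ?l" by auto
        with i assms show ?thesis by (simp add: last_conv_nth hd_conv_nth)
      qed
    qed
  qed
  then show ?thesis by (simp only: interp_comp.simps Un_assoc)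
qed

lemma interp_sword_Comps_eq_graph_on:
  assumes "(\<Union>c\<in>set cs. interp_comp c) \<subseteq> graph_on n f"
    and "{x \<in> {1..n}. f x \<noteq> x} \<subseteq> Domain (\<Union>c\<in>set cs. interp_comp c)"
  shows "interp_sword n (Comps cs) = graph_on n f"
proof -
  define E where "E = (\<Union>c\<in>set cs. interp_comp c)"
  have E: "E \<subseteq> graph_on n f" "\<And>p. p \<in> {1..n} \<Longrightarrow> p \<notin> Domain E \<Longrightarrow> f p = p"
    using assms unfolding E_def by auto
  have "(p, f p) \<in> E \<longleftrightarrow> p \<in> Domain E" for p
    using E(1) unfolding graph_on_def by auto
  with E have "E \<union> {(p, p) | p. p \<in> {1..n} \<and> p \<notin> Domain E} = graph_on n f"
    unfolding graph_on_def by auto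
  then show ?thesis
    by (simp add: E_def)
qed

lemma interp_sword_IdWord_eq_graph_on:
  "\<forall>x\<in>{1..n}. f x = x \<Longrightarrow> interp_sword n IdWord = graph_on n f"
  unfolding graph_on_def by force

lemma distinct_concat_map:
  assumes "distinct xs" "\<forall>x\<in>set xs. distinct (h x)"
    and "\<forall>x\<in>set xs. \<forall>y\<in>set xs. x \<noteq> y \<longrightarrow> set (h x) \<inter> set (h y) = {}"
  shows "distinct (concat (map h xs))"
  using assms by (induction xs) auto

lemma funpow_diff: "i \<le> k \<Longrightarrow> (f^^k) x = (f^^(k - i)) ((f^^i) x)"
  by (metis funpow_add le_add_diff_inverse2 comp_apply)

lemma orbit_eq_orbit_of_periodic:
  assumes "x \<in> orbit f x" "y \<in> orbit f x"
  shows "orbit f y = orbit f x"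
  using assms by (intro orbit_cyclic_eq3) (auto simp: cyclic_on_def)

lemma orbit_eq_if_same_image:
  assumes "f a = f b"
  shows "orbit f a = orbit f b"
proof -
  have "orbit f a \<subseteq> orbit f b" if "f a = f b" for a b
  proof
    fix y assume "y \<in> orbit f a"
    then show "y \<in> orbit f b"
      using that by induction (simp_all add: orbit.base orbit.step)
  qed
  with assms show ?thesis by (metis equalityI)
qed

section \<open>Decomposition of the functional graph\<close>

locale endomap =
  fixes n :: nat and f :: "nat \<Rightarrow> nat"
  assumes maps_into: "\<forall>p\<in>{1..n}. f p \<in> {1..n}"
begin

definition periodic :: "nat \<Rightarrow> bool" where
  "periodic x \<longleftrightarrow> x \<in> orbit f x"

text \<open>The points whose path reaches q before passing through a periodic point; for periodic q
  this is the tree hanging at q.\<close>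

definition branch :: "nat \<Rightarrow> nat set" where
  "branch q = {x \<in> {1..n}. \<exists>k. (f^^k) x = q \<and> (\<forall>j<k. \<not> periodic ((f^^j) x))}"

definition children :: "nat \<Rightarrow> nat set" where
  "children q = {a \<in> {1..n}. \<not> periodic a \<and> f a = q}"

lemma funpow_in_range: "x \<in> {1..n} \<Longrightarrow> (f^^k) x \<in> {1..n}"
  using maps_into by (induction k) auto

lemma orbit_in_range: "x \<in> {1..n} \<Longrightarrow> orbit f x \<subseteq> {1..n}"
  unfolding orbit_altdef using funpow_in_range by blast

lemma periodic_in_orbit: "periodic x \<Longrightarrow> y \<in> orbit f x \<Longrightarrow> periodic y"
  unfolding periodic_def by (rule self_in_orbit_trans)

lemma periodicI: "0 < k \<Longrightarrow> (f^^k) x = x \<Longrightarrow> periodic x"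
  unfolding periodic_def orbit_altdef by force

lemma branch_in_range: "branch q \<subseteq> {1..n}"
  unfolding branch_def by blast

lemma finite_branch: "finite (branch q)"
  using branch_in_range by (rule finite_subset) simp

lemma self_in_branch: "q \<in> {1..n} \<Longrightarrow> q \<in> branch q"
  unfolding branch_def by (auto intro!: exI[of _ 0])

lemma branch_eq_insert_children:
  assumes "q \<in> {1..n}"
  shows "branch q = insert q (\<Union>a\<in>children q. branch a)"
proof (intro equalityI subsetI)
  fix x assume "x \<in> branch q"
  then obtain k where x: "x \<in> {1..n}" "(f^^k) x = q" "\<forall>j<k. \<not> periodic ((f^^j) x)"
    unfolding branch_def by blast
  show "x \<in> insert q (\<Union>a\<in>children q. branch a)"
  proof (cases k)
    case (Suc m)
    with x funpow_in_range[of x m] have "(f^^m) x \<in> children q"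
      by (simp add: children_def)
    moreover from x Suc have "x \<in> branch ((f^^m) x)"
      by (auto simp: branch_def)
    ultimately show ?thesis by blast
  qed (use x in simp)
next
  fix x assume "x \<in> insert q (\<Union>a\<in>children q. branch a)"
  then consider "x = q" | a where "a \<in> children q" "x \<in> branch a" by blast
  then show "x \<in> branch q"
  proof cases
    case 2
    then obtain m where "x \<in> {1..n}" "(f^^m) x = a" "\<forall>j<m. \<not> periodic ((f^^j) x)"
      unfolding branch_def by blast
    with 2 show ?thesis
      unfolding branch_def children_def by (auto intro!: exI[of _ "Suc m"] simp: less_Suc_eq)
  qed (use assms self_in_branch in simp)
qed

lemma branch_overlap:
  assumes "x \<in> branch a" "x \<in> branch b" "a \<noteq> b"
  shows "\<not> periodic a \<and> b \<in> orbit f a \<or> \<not> periodic b \<and> a \<in> orbit f b"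
proof -
  have later: "\<not> periodic ((f^^i) x) \<and> (f^^k) x \<in> orbit f ((f^^i) x)"
    if "i < k" "\<forall>j<k. \<not> periodic ((f^^j) x)" for i k
    using that funpow_diff[of i k f x] by (auto simp: orbit_altdef)
  obtain i k where i: "(f^^i) x = a" "\<forall>j<i. \<not> periodic ((f^^j) x)"
    and k: "(f^^k) x = b" "\<forall>j<k. \<not> periodic ((f^^j) x)"
    using assms(1,2) unfolding branch_def by blast
  with assms(3) have "i < k \<or> k < i" by (metis linorder_neqE_nat)
  with later i k show ?thesis by blast
qed

lemma children_branches_disjoint:
  assumes "a \<in> children q" "b \<in> children q" "a \<noteq> b"
  shows "branch a \<inter> branch b = {}"
proof (rule ccontr)
  have not_in_orbit: "b \<notin> orbit f a" if "a \<in> children q" "b \<in> children q" for a b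
  proof
    assume "b \<in> orbit f a"
    moreover from that have "orbit f a = orbit f b"
      by (intro orbit_eq_if_same_image) (simp add: children_def)
    ultimately show False
      using that(2) by (simp add: children_def periodic_def)
  qed
  assume "branch a \<inter> branch b \<noteq> {}"
  then obtain x where "x \<in> branch a" "x \<in> branch b" by blast
  from branch_overlap[OF this assms(3)] have "b \<in> orbit f a \<or> a \<in> orbit f b" by blast
  with not_in_orbit assms show False by blast
qed

lemma periodic_branches_disjoint:
  assumes "periodic a" "periodic b" "a \<noteq> b"
  shows "branch a \<inter> branch b = {}"
proof (rule ccontr)
  assume "branch a \<inter> branch b \<noteq> {}"
  then obtain x where "x \<in> branch a" "x \<in> branch b" by blast
  from branch_overlap[OF this assms(3)] assms(1,2) show False by blast
qed

lemma parent_notin_branch: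
  assumes "a \<in> children q"
  shows "q \<notin> branch a"
proof
  assume "q \<in> branch a"
  then obtain m where m: "(f^^m) q = a" "\<forall>j<m. \<not> periodic ((f^^j) q)"
    unfolding branch_def by blast
  from assms have fa: "f a = q" "\<not> periodic a" by (auto simp: children_def)
  with m have "periodic q" by (intro periodicI[of "Suc m"]) simp_all
  show False
  proof (cases m)
    case 0 with m fa \<open>periodic q\<close> show False by simp
  next
    case (Suc m') with m \<open>periodic q\<close> show False by (metis funpow_0 zero_less_Suc)
  qed
qed

lemma branch_child_psubset:
  assumes a: "a \<in> children q"
  shows "branch a \<subset> branch q"
proof -
  from a have q: "q \<in> {1..n}"
    using maps_into unfolding children_def by force
  have "branch a \<subseteq> branch q"
    by (subst branch_eq_insert_children[OF q]) (use a in blast)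
  with self_in_branch[OF q] parent_notin_branch[OF a] show ?thesis by blast
qed

lemma exists_periodic_branch:
  assumes x: "x \<in> {1..n}"
  shows "\<exists>c. periodic c \<and> x \<in> branch c"
proof -
  have "\<not> inj_on (\<lambda>k. (f^^k) x) {0..n}"
  proof
    assume "inj_on (\<lambda>k. (f^^k) x) {0..n}"
    then have "card {0..n} \<le> card {1..n}"
      using funpow_in_range[OF x] by (intro card_inj_on_le) auto
    then show False by simp
  qed
  then obtain i j where "i < j" "(f^^i) x = (f^^j) x"
    unfolding inj_on_def by (metis linorder_neqE_nat)
  then have ex: "periodic ((f^^i) x)"
    using funpow_diff[of i j f x] by (intro periodicI[of "j - i"]) simp_all
  define k where "k = (LEAST k. periodic ((f^^k) x))"
  have "periodic ((f^^k) x)"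
    unfolding k_def using ex by (rule LeastI)
  moreover have "\<forall>j<k. \<not> periodic ((f^^j) x)"
    unfolding k_def using not_less_Least by blast
  ultimately show ?thesis
    using x unfolding branch_def by blast
qed

definition represents_branch :: "tree \<Rightarrow> nat \<Rightarrow> bool" where
  "represents_branch t q \<longleftrightarrow> valid_tree n t \<and> root t = q \<and>
     distinct (tree_points t) \<and> set (tree_points t) = branch q \<and>
     interp_tree t \<subseteq> graph_on n f \<and> Domain (interp_tree t) = branch q - {q}"

lemma represents_branch_join:
  assumes q: "q \<in> {1..n}" and as: "distinct as" "set as = children q"
    and g: "\<forall>a\<in>children q. represents_branch (g a) a"
  shows "represents_branch (join_branches (map g as) q) q"
proof -
  let ?t = "join_branches (map g as) q"
  have children_in_range: "children q \<subseteq> {1..n}"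
    unfolding children_def by blast
  have branch_q: "branch q = insert q (\<Union>a\<in>children q. branch a)"
    by (rule branch_eq_insert_children[OF q])
  have q_new: "q \<notin> (\<Union>a\<in>children q. branch a)"
    using parent_notin_branch by blast
  have "valid_tree n ?t"
    using q g as(2) by (auto simp: valid_join_branches represents_branch_def)
  moreover have "distinct (tree_points ?t)"
  proof -
    have "distinct (concat (map (tree_points \<circ> g) as))"
      using as g children_branches_disjoint
      by (intro distinct_concat_map) (auto simp: represents_branch_def)
    moreover have "set (concat (map (tree_points \<circ> g) as)) = (\<Union>a\<in>children q. branch a)"
      using as g by (auto simp: represents_branch_def)
    ultimately show ?thesis using q_new by simp
  qed
  moreover have "set (tree_points ?t) = branch q"
    using as g branch_q by (auto simp: represents_branch_def)
  moreover have "interp_tree ?t \<subseteq> graph_on n f"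
    using as g children_in_range
    by (auto simp: interp_join_branches represents_branch_def graph_on_def children_def)
  moreover have "Domain (interp_tree ?t) = branch q - {q}"
  proof -
    have "Domain (interp_tree ?t) =
        (\<Union>a\<in>children q. Domain (interp_tree (g a))) \<union> (\<lambda>a. root (g a)) ` children q"
      using as(2) by (simp add: Domain_interp_join_branches image_image)
    also have "\<dots> = (\<Union>a\<in>children q. branch a - {a}) \<union> children q"
      using g unfolding represents_branch_def by (simp cong: SUP_cong image_cong)
    also have "\<dots> = (\<Union>a\<in>children q. branch a)"
      using children_in_range self_in_branch by (auto 4 3)
    also have "\<dots> = branch q - {q}"
      using branch_q q_new by (simp add: Diff_insert_absorb)
    finally show ?thesis .
  qed
  ultimately show ?thesis by (simp add: represents_branch_def)
qed

lemma exists_branch_tree: "q \<in> {1..n} \<Longrightarrow> \<exists>t. represents_branch t q"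
proof (induction "card (branch q)" arbitrary: q rule: less_induct)
  case less
  have "\<exists>t. represents_branch t a" if "a \<in> children q" for a
    using branch_child_psubset[OF that] finite_branch that less.hyps
    by (metis psubset_card_mono children_def mem_Collect_eq)
  then obtain g where "\<forall>a\<in>children q. represents_branch (g a) a" by metis
  moreover have "finite (children q)"
    unfolding children_def by simp
  ultimately show ?case
    using represents_branch_join[OF less.prems, of "sorted_list_of_set (children q)"] by auto
qed

definition branch_tree :: "nat \<Rightarrow> tree" where
  "branch_tree q = (SOME t. represents_branch t q)"

lemma represents_branch_tree: "q \<in> {1..n} \<Longrightarrow> represents_branch (branch_tree q) q"
  unfolding branch_tree_def using exists_branch_tree by (rule someI_ex)

lemma in_range_if_branch_nonempty: "x \<in> branch q \<Longrightarrow> q \<in> {1..n}"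
  unfolding branch_def using funpow_in_range by blast

definition cycle_points :: "nat \<Rightarrow> nat list" where
  "cycle_points c = map (\<lambda>k. (f^^k) c) [0..<funpow_dist1 f c c]"

lemma
  assumes "periodic c"
  shows distinct_cycle_points: "distinct (cycle_points c)"
    and set_cycle_points: "set (cycle_points c) = orbit f c"
  using assms inj_on_funpow_dist1[of c f c] orbit_conv_funpow_dist1[of c f]
  by (simp_all add: cycle_points_def periodic_def distinct_map set_upt del: upt_Suc)

lemma nth_cycle_points_Suc_mod:
  assumes "periodic c" "i < length (cycle_points c)"
  shows "cycle_points c ! (Suc i mod length (cycle_points c)) = f (cycle_points c ! i)"
proof -
  let ?p = "funpow_dist1 f c c"
  have "(f^^?p) c = c"
    using assms(1) unfolding periodic_def by (rule funpow_dist1_prop)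
  then have "(f^^(Suc i mod ?p)) c = (f^^Suc i) c"
    by (rule funpow_mod_eq)
  with assms(2) show ?thesis
    by (simp add: cycle_points_def del: upt_Suc)
qed

lemma cycle_component:
  assumes c: "periodic c" "c \<in> {1..n}" and len: "2 \<le> length (cycle_points c)"
  defines "C \<equiv> Cycle (map branch_tree (cycle_points c))"
  shows "valid_comp n C" "distinct (comp_points C)"
    "set (comp_points C) = (\<Union>y\<in>orbit f c. branch y)"
    "interp_comp C \<subseteq> graph_on n f" "Domain (interp_comp C) = (\<Union>y\<in>orbit f c. branch y)"
proof -
  let ?ys = "cycle_points c"
  let ?ts = "map branch_tree ?ys"
  have ys: "set ?ys = orbit f c" "distinct ?ys"
    using c(1) by (simp_all add: set_cycle_points distinct_cycle_points)
  have in_range: "orbit f c \<subseteq> {1..n}"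
    using c(2) by (rule orbit_in_range)
  have T: "represents_branch (branch_tree y) y" if "y \<in> orbit f c" for y
    using that in_range represents_branch_tree by blast
  have edges: "{(root (?ts ! i), root (?ts ! (Suc i mod length ?ts))) | i. i < length ?ts} =
      (\<lambda>y. (y, f y)) ` orbit f c"
  proof -
    have "(root (?ts ! i), root (?ts ! (Suc i mod length ?ts))) = (?ys ! i, f (?ys ! i))"
      if "i < length ?ys" for i
    proof -
      have mod: "Suc i mod length ?ys < length ?ys"
        using len by (intro mod_less_divisor) linarith
      then have "?ys ! i \<in> orbit f c" "?ys ! (Suc i mod length ?ys) \<in> orbit f c"
        using that ys(1) nth_mem by blast+
      with T that mod nth_cycle_points_Suc_mod[OF c(1) that] show ?thesis
        by (simp add: represents_branch_def)
    qed
    then have "{(root (?ts ! i), root (?ts ! (Suc i mod length ?ts))) | i. i < length ?ts} =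
        {(?ys ! i, f (?ys ! i)) | i. i < length ?ys}"
      by force
    also have "\<dots> = (\<lambda>y. (y, f y)) ` orbit f c"
      unfolding ys(1)[symmetric] by (auto simp: in_set_conv_nth image_iff)
    finally show ?thesis .
  qed
  have interp: "interp_comp C =
      (\<Union>y\<in>orbit f c. interp_tree (branch_tree y)) \<union> (\<lambda>y. (y, f y)) ` orbit f c"
  proof -
    have "?ts \<noteq> []" using len by auto
    then show ?thesis
      unfolding C_def interp_Cycle[OF \<open>?ts \<noteq> []\<close>] edges by (simp add: ys(1) image_image)
  qed
  show "valid_comp n C"
    using len T unfolding C_def by (auto simp: ys(1) represents_branch_def)
  show "distinct (comp_points C)"
    unfolding C_def comp_points.simps map_map
    using ys T periodic_branches_disjoint periodic_in_orbit[OF c(1)]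
    by (intro distinct_concat_map) (auto simp: represents_branch_def)
  show "set (comp_points C) = (\<Union>y\<in>orbit f c. branch y)"
    using T by (simp add: C_def ys(1) represents_branch_def)
  show "interp_comp C \<subseteq> graph_on n f"
    using T in_range unfolding interp by (auto simp: represents_branch_def graph_on_def)
  have "Domain (interp_comp C) = (\<Union>y\<in>orbit f c. Domain (interp_tree (branch_tree y))) \<union> orbit f c"
    unfolding interp by (simp add: Domain_fst image_Un image_UN image_image)
  also have "\<dots> = (\<Union>y\<in>orbit f c. branch y - {y}) \<union> orbit f c"
    using T by (simp add: represents_branch_def cong: SUP_cong)
  also have "\<dots> = (\<Union>y\<in>orbit f c. branch y)"
    using in_range self_in_branch by (auto 4 3)
  finally show "Domain (interp_comp C) = (\<Union>y\<in>orbit f c. branch y)" .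
qed

lemma orbit_eq_singleton_if_short_cycle:
  assumes "periodic c" "\<not> 2 \<le> length (cycle_points c)"
  shows "orbit f c = {c}"
proof -
  from assms(2) have "length (cycle_points c) = 1"
    by (simp add: cycle_points_def del: upt_Suc)
  moreover have "cycle_points c ! 0 = c"
    by (simp add: cycle_points_def del: upt_Suc)
  ultimately have "cycle_points c = [c]"
    by (metis One_nat_def length_0_conv length_Suc_conv nth_Cons_0)
  with assms(1) show ?thesis
    using set_cycle_points by force
qed

definition component :: "nat \<Rightarrow> comp list" where
  "component c =
     (if 2 \<le> length (cycle_points c) then [Cycle (map branch_tree (cycle_points c))]
      else if is_point (branch_tree c) then [] else [NTree (branch_tree c)])"

definition renders :: "comp list \<Rightarrow> nat set \<Rightarrow> bool" where
  "renders cs A \<longleftrightarrow> (\<forall>C\<in>set cs. valid_comp n C) \<and> distinct (concat (map comp_points cs)) \<and>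
     set (concat (map comp_points cs)) \<subseteq> A \<and> (\<Union>C\<in>set cs. interp_comp C) \<subseteq> graph_on n f \<and>
     {x \<in> A. f x \<noteq> x} \<subseteq> Domain (\<Union>C\<in>set cs. interp_comp C)"

lemma renders_component:
  assumes c: "periodic c" "c \<in> {1..n}"
  shows "renders (component c) (\<Union>y\<in>orbit f c. branch y)"
proof (cases "2 \<le> length (cycle_points c)")
  case True
  then show ?thesis
    using cycle_component[OF c True] by (auto simp: renders_def component_def simp del: interp_comp.simps)
next
  case short: False
  then have orbit: "orbit f c = {c}"
    using orbit_eq_singleton_if_short_cycle[OF c(1)] by blast
  then have "f c = c"
    by (simp add: orbit_eq_singleton_iff)
  have T: "represents_branch (branch_tree c) c"
    using c(2) by (rule represents_branch_tree)
  show ?thesis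
  proof (cases "is_point (branch_tree c)")
    case True
    then obtain p where "branch_tree c = Point p"
      by (cases "branch_tree c") auto
    with T have "branch c = {c}"
      by (auto simp: represents_branch_def)
    with True short \<open>f c = c\<close> show ?thesis
      by (simp add: renders_def component_def orbit)
  next
    case False
    with short T \<open>f c = c\<close> show ?thesis
      by (auto simp: renders_def component_def orbit represents_branch_def)
  qed
qed

lemma renders_concat:
  assumes "distinct xs" "\<forall>x\<in>set xs. renders (h x) (A x)"
    and disjoint: "\<forall>x\<in>set xs. \<forall>y\<in>set xs. x \<noteq> y \<longrightarrow> A x \<inter> A y = {}"
  shows "renders (concat (map h xs)) (\<Union>x\<in>set xs. A x)"
proof -
  let ?pts = "\<lambda>x. concat (map comp_points (h x))"
  let ?E = "\<lambda>cs. \<Union>C\<in>set cs. interp_comp C"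
  from assms(2) have valid: "\<forall>x\<in>set xs. \<forall>C\<in>set (h x). valid_comp n C"
    and distinct: "\<forall>x\<in>set xs. distinct (?pts x)"
    and pts: "\<forall>x\<in>set xs. set (?pts x) \<subseteq> A x"
    and graph: "\<forall>x\<in>set xs. ?E (h x) \<subseteq> graph_on n f"
    and dom: "\<forall>x\<in>set xs. {y \<in> A x. f y \<noteq> y} \<subseteq> Domain (?E (h x))"
    unfolding renders_def by simp_all
  have "set (?pts x) \<inter> set (?pts y) = {}" if "x \<in> set xs" "y \<in> set xs" "x \<noteq> y" for x y
    using pts disjoint that by blast
  with assms(1) distinct have "distinct (concat (map ?pts xs))"
    by (intro distinct_concat_map) auto
  moreover have "{y \<in> (\<Union>x\<in>set xs. A x). f y \<noteq> y} \<subseteq> Domain (?E (concat (map h xs)))"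
  proof
    fix y assume "y \<in> {y \<in> (\<Union>x\<in>set xs. A x). f y \<noteq> y}"
    then obtain x where "x \<in> set xs" "y \<in> A x" "f y \<noteq> y" by blast
    with dom have "y \<in> Domain (?E (h x))" by blast
    moreover have "?E (h x) \<subseteq> ?E (concat (map h xs))"
      using \<open>x \<in> set xs\<close> by auto
    ultimately show "y \<in> Domain (?E (concat (map h xs)))"
      by (meson Domain_mono subsetD)
  qed
  moreover have "concat (map comp_points (concat (map h xs))) = concat (map ?pts xs)"
    by (induction xs) simp_all
  moreover have "set (concat (map ?pts xs)) \<subseteq> (\<Union>x\<in>set xs. A x)"
    using pts by fastforce
  moreover have "?E (concat (map h xs)) \<subseteq> graph_on n f"
    using graph by fastforce
  ultimately show ?thesis
    using valid unfolding renders_def by simp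
qed

definition cycle_representatives :: "nat set" where
  "cycle_representatives = {c \<in> {1..n}. periodic c \<and> (\<forall>y\<in>orbit f c. c \<le> y)}"

lemma representative_orbits_disjoint:
  assumes "c \<in> cycle_representatives" "d \<in> cycle_representatives" "c \<noteq> d"
  shows "orbit f c \<inter> orbit f d = {}"
proof (rule ccontr)
  from assms(1,2) have c: "c \<in> orbit f c" "\<forall>y\<in>orbit f c. c \<le> y"
    and d: "d \<in> orbit f d" "\<forall>y\<in>orbit f d. d \<le> y"
    by (simp_all add: cycle_representatives_def periodic_def)
  assume "orbit f c \<inter> orbit f d \<noteq> {}"
  then obtain z where "z \<in> orbit f c" "z \<in> orbit f d" by blast
  then have "orbit f c = orbit f d"
    using orbit_eq_orbit_of_periodic[OF c(1)] orbit_eq_orbit_of_periodic[OF d(1)] by metis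
  with c(1) d(1) have "c \<in> orbit f d" "d \<in> orbit f c" by simp_all
  with c(2) d(2) have "d \<le> c" "c \<le> d" by simp_all
  with assms(3) show False by simp
qed

lemma periodic_in_representative_orbit:
  assumes y: "periodic y" "y \<in> {1..n}"
  shows "\<exists>c\<in>cycle_representatives. y \<in> orbit f c"
proof -
  define c where "c = Min (orbit f y)"
  have fin: "finite (orbit f y)"
    using y(1) unfolding periodic_def by (rule finite_orbit)
  then have "c \<in> orbit f y"
    unfolding c_def using orbit_nonempty by (rule Min_in)
  then have orbit_c: "orbit f c = orbit f y"
    using y(1) unfolding periodic_def by (intro orbit_eq_orbit_of_periodic)
  have "periodic c"
    using y(1) \<open>c \<in> orbit f y\<close> by (rule periodic_in_orbit)
  moreover have "c \<in> {1..n}"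
    using \<open>c \<in> orbit f y\<close> orbit_in_range[OF y(2)] by blast
  moreover have "\<forall>z\<in>orbit f c. c \<le> z"
    using fin unfolding orbit_c by (simp add: c_def)
  moreover have "y \<in> orbit f c"
    using y(1) unfolding orbit_c periodic_def .
  ultimately show ?thesis
    unfolding cycle_representatives_def by (intro bexI[of _ c]) simp_all
qed

lemma renders_all: "\<exists>cs. renders cs {1..n}"
proof -
  let ?A = "\<lambda>c. \<Union>y\<in>orbit f c. branch y"
  let ?R = "cycle_representatives"
  have reps: "c \<in> {1..n}" "periodic c" if "c \<in> ?R" for c
    using that unfolding cycle_representatives_def by blast+
  have "finite ?R"
    using reps by (meson finite_atLeastAtMost finite_subset subsetI)
  then have set_R: "set (sorted_list_of_set ?R) = ?R"
    by simp
  have disjoint: "?A c \<inter> ?A d = {}" if "c \<in> ?R" "d \<in> ?R" "c \<noteq> d" for c d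
  proof -
    have "branch y \<inter> branch z = {}" if "y \<in> orbit f c" "z \<in> orbit f d" for y z
    proof (rule periodic_branches_disjoint)
      show "periodic y" "periodic z"
        using that reps \<open>c \<in> ?R\<close> \<open>d \<in> ?R\<close> periodic_in_orbit by blast+
      show "y \<noteq> z"
        using that representative_orbits_disjoint[OF \<open>c \<in> ?R\<close> \<open>d \<in> ?R\<close> \<open>c \<noteq> d\<close>] by blast
    qed
    then show ?thesis by blast
  qed
  have "renders (concat (map component (sorted_list_of_set ?R))) (\<Union>c\<in>?R. ?A c)"
    using renders_concat[of "sorted_list_of_set ?R" component ?A]
    unfolding set_R using disjoint reps renders_component by simp
  moreover have "(\<Union>c\<in>?R. ?A c) = {1..n}"
  proof
    show "(\<Union>c\<in>?R. ?A c) \<subseteq> {1..n}"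
      using branch_in_range by blast
    show "{1..n} \<subseteq> (\<Union>c\<in>?R. ?A c)"
    proof
      fix x assume "x \<in> {1..n}"
      then obtain y where y: "periodic y" "x \<in> branch y"
        using exists_periodic_branch by blast
      then obtain c where "c \<in> ?R" "y \<in> orbit f c"
        using periodic_in_representative_orbit in_range_if_branch_nonempty by blast
      with y show "x \<in> (\<Union>c\<in>?R. ?A c)" by blast
    qed
  qed
  ultimately show ?thesis by metis
qed

lemma exists_derivation:
  "\<exists>s. valid_sword n s \<and> distinct (points_of_word (yield_sword s)) \<and> interp_sword n s = graph_on n f"
proof -
  obtain cs where cs: "renders cs {1..n}"
    using renders_all by blast
  show ?thesis
  proof (cases "cs = []")
    case True
    with cs have "\<forall>x\<in>{1..n}. f x = x"
      by (auto simp: renders_def)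
    then have "interp_sword n IdWord = graph_on n f"
      by (rule interp_sword_IdWord_eq_graph_on)
    then show ?thesis
      by (intro exI[of _ IdWord]) simp
  next
    case False
    from cs have "interp_sword n (Comps cs) = graph_on n f"
      unfolding renders_def by (intro interp_sword_Comps_eq_graph_on) simp_all
    with False cs show ?thesis
      by (intro exI[of _ "Comps cs"]) (simp add: renders_def points_of_word_concat o_def)
  qed
qed

end

theorem mainTheorem1:
  fixes n :: nat and f :: "nat \<Rightarrow> nat"
  assumes "n \<ge> 1"
    and "\<forall>p\<in>{1..n}. f p \<in> {1..n}"
  shows "\<exists>w. well_formed n w \<and>
           (\<forall>s. valid_sword n s \<and> yield_sword s = w \<longrightarrow> interp_sword n s = graph_on n f)"
proof -
  interpret endomap n f
    using assms(2) by unfold_locales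
  obtain s where s: "valid_sword n s" "distinct (points_of_word (yield_sword s))"
      "interp_sword n s = graph_on n f"
    using exists_derivation by blast
  show ?thesis
  proof (intro exI conjI allI impI)
    show "well_formed n (yield_sword s)"
      using s unfolding well_formed_def generated_def by blast
    fix s' assume "valid_sword n s' \<and> yield_sword s' = yield_sword s"
    with s have "s' = s"
      using yield_sword_inj by blast
    with s show "interp_sword n s' = graph_on n f" by simp
  qed
qed

end
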